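(* Let $\theta\in\mathbb{R}$, let $G$ be a graph with maximum degree at most $D$ and $u$ a vertex of $G$. Then: if $u$ is $\theta$-positive, $\sum_{v\ne u}\big(\nu_{G-u,v}(\{\theta\})-\nu_{G,v}(\{\theta\})\big)=1$; if $u$ is $\theta$-neutral, $\sum_{v\ne u}\big(\nu_{G-u,v}(\{\theta\})-\nu_{G,v}(\{\theta\})\big)=0$; if $u$ is $\theta$-essential, $\sum_{v\in V(G)}\big(\nu_{G-u,v}(\{\theta\})-\nu_{G,v}(\{\theta\})\big)=-1$, with the convention $\nu_{G-u,u}(\{\theta\})=0$.
   Context: Matching measure: for a (not necessarily connected) graph $G$ and vertex $u$, $\nu_{G,u}$ is the spectral measure at the one-vertex path $u$ of the adjacency operator of the path tree $T(G,u)$ (vertices: finite paths in $G$ starting at $u$; two paths adjacent iff one is obtained from the other by deleting its last vertex). $G-u$ is $G$ with $u$ deleted. $u$ is $\theta$-essential if $\nu_{G,u}(\{\theta\})>0$; $\theta$-positive if $\sum_{v\sim u}\nu_{G-u,v}(\{\theta\})>0$ (sum over neighbors of $u$); $\theta$-neutral if it is not $\theta$-essential and $\sum_{v\sim u}\nu_{G-u,v}(\{\theta\})=0$. *)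

theory Defs
  imports Complex_Main
begin

text \<open>A finite graph is given by a finite vertex set V and a symmetric irreflexive
adjacency relation E.  The graph G - u is (V - {u}, E): paths are required to stay
inside the vertex set, so edges at u become irrelevant.\<close>

definition path_tree_vertices :: "'a set \<Rightarrow> ('a \<Rightarrow> 'a \<Rightarrow> bool) \<Rightarrow> 'a \<Rightarrow> 'a list set" where
  "path_tree_vertices V E u =
     {xs. xs \<noteq> [] \<and> hd xs = u \<and> distinct xs \<and> set xs \<subseteq> V \<and>
          (\<forall>i. Suc i < length xs \<longrightarrow> E (xs ! i) (xs ! Suc i))}"

definition path_tree_adj :: "'a list \<Rightarrow> 'a list \<Rightarrow> bool" where
  "path_tree_adj xs ys \<longleftrightarrow> (\<exists>v. ys = xs @ [v]) \<or> (\<exists>v. xs = ys @ [v])"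

definition path_tree_op :: "'a set \<Rightarrow> ('a \<Rightarrow> 'a \<Rightarrow> bool) \<Rightarrow> 'a \<Rightarrow> ('a list \<Rightarrow> real) \<Rightarrow> 'a list \<Rightarrow> real" where
  "path_tree_op V E u f xs =
     (\<Sum>ys\<in>{ys\<in>path_tree_vertices V E u. path_tree_adj xs ys}. f ys)"

definition eigenspace_pt :: "'a set \<Rightarrow> ('a \<Rightarrow> 'a \<Rightarrow> bool) \<Rightarrow> 'a \<Rightarrow> real \<Rightarrow> ('a list \<Rightarrow> real) set" where
  "eigenspace_pt V E u \<theta> =
     {f. (\<forall>xs. xs \<notin> path_tree_vertices V E u \<longrightarrow> f xs = 0) \<and>
         (\<forall>xs\<in>path_tree_vertices V E u. path_tree_op V E u f xs = \<theta> * f xs)}"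

text \<open>Spectral measure of the point {theta} at the root [u]:
  nu_{G,u}({theta}) = < e_root, E({theta}) e_root >, where E({theta}) is the orthogonal
  projection onto the theta-eigenspace (inner product = sum over path tree vertices).\<close>
definition matching_atom :: "'a set \<Rightarrow> ('a \<Rightarrow> 'a \<Rightarrow> bool) \<Rightarrow> 'a \<Rightarrow> real \<Rightarrow> real" where
  "matching_atom V E u \<theta> =
     (let P = path_tree_vertices V E u;
          e = (\<lambda>xs. if xs = [u] \<and> xs \<in> P then 1 else 0 :: real);
          K = eigenspace_pt V E u \<theta>;
          p = (THE p. p \<in> K \<and> (\<forall>g\<in>K. (\<Sum>xs\<in>P. (e xs - p xs) * g xs) = 0))
      in (\<Sum>xs\<in>P. e xs * p xs))"

definition essential :: "'a set \<Rightarrow> ('a \<Rightarrow> 'a \<Rightarrow> bool) \<Rightarrow> real \<Rightarrow> 'a \<Rightarrow> bool" where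
  "essential V E \<theta> u \<longleftrightarrow> matching_atom V E u \<theta> > 0"

definition nbr_atom_sum :: "'a set \<Rightarrow> ('a \<Rightarrow> 'a \<Rightarrow> bool) \<Rightarrow> real \<Rightarrow> 'a \<Rightarrow> real" where
  "nbr_atom_sum V E \<theta> u = (\<Sum>v\<in>{v\<in>V. E u v}. matching_atom (V - {u}) E v \<theta>)"

definition positive_vtx :: "'a set \<Rightarrow> ('a \<Rightarrow> 'a \<Rightarrow> bool) \<Rightarrow> real \<Rightarrow> 'a \<Rightarrow> bool" where
  "positive_vtx V E \<theta> u \<longleftrightarrow> nbr_atom_sum V E \<theta> u > 0"

definition neutral_vtx :: "'a set \<Rightarrow> ('a \<Rightarrow> 'a \<Rightarrow> bool) \<Rightarrow> real \<Rightarrow> 'a \<Rightarrow> bool" where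
  "neutral_vtx V E \<theta> u \<longleftrightarrow> \<not> essential V E \<theta> u \<and> nbr_atom_sum V E \<theta> u = 0"

end

(*
  Let mu(S) be the matching polynomial of the graph induced on S.  Godsil's path-tree
  identity says that the functions q |-> mu(V - q) / mu(V) on the vertices q of the path
  tree T(G,u) solve (x - A) w = e_[u], where A is the adjacency operator of T(G,u).  The
  resolvent of a symmetric operator has only simple poles, whose residues are the
  spectral projections; hence (x - theta) mu(V - u) / mu(V) tends to nu_{G,u}({theta})
  as x -> theta.  So nu_{G,u}({theta}) is nonzero exactly when the multiplicity of the
  root theta drops by one from mu(V) to mu(V - u), and since mu(V)' is the sum of the
  mu(V - v), the atoms nu_{G,v}({theta}) add up to the multiplicity of theta in mu(V).
  Dually, the recurrence mu(V) = x mu(V - u) - sum_{w ~ u} mu(V - u - w) shows that the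
  neighbour sum is nonzero exactly when the multiplicity rises by one.  The three cases
  follow by comparing these multiplicities.
*)
theory Submission
  imports Defs "HOL-Computational_Algebra.Polynomial"
begin

section \<open>Rational functions near a point\<close>

lemma order_factor_decomp:
  fixes p :: "'a::idom poly"
  assumes "p \<noteq> 0"
  obtains q where "p = [:-a, 1:] ^ order a p * q" "poly q a \<noteq> 0"
  using order_decomp[OF assms, of a] poly_eq_0_iff_dvd by blast

lemma eventually_poly_nonzero_at:
  fixes p :: "'a::real_normed_field poly"
  assumes "p \<noteq> 0"
  shows "eventually (\<lambda>x. poly p x \<noteq> 0) (at a)"
proof -
  obtain q where q: "p = [:-a, 1:] ^ order a p * q" "poly q a \<noteq> 0"
    using order_factor_decomp[OF assms] .
  have "eventually (\<lambda>x. poly q x \<noteq> 0) (at a)"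
    by (rule tendsto_imp_eventually_ne[OF _ q(2)]) (intro tendsto_intros)
  with eventually_neq_at_within[of a a] show ?thesis
    by eventually_elim (subst q(1), simp)
qed

lemma tendsto_poly_quotient:
  fixes p q :: "'a::real_normed_field poly"
  assumes "p \<noteq> 0" "q \<noteq> 0" "order a q \<le> order a p"
  obtains L where "((\<lambda>x. poly p x / poly q x) \<longlongrightarrow> L) (at a)"
    and "L \<noteq> 0 \<longleftrightarrow> order a p = order a q"
proof -
  obtain p0 where p0: "p = [:-a, 1:] ^ order a p * p0" "poly p0 a \<noteq> 0"
    using order_factor_decomp[OF assms(1)] .
  obtain q0 where q0: "q = [:-a, 1:] ^ order a q * q0" "poly q0 a \<noteq> 0"
    using order_factor_decomp[OF assms(2)] .
  define k where "k = order a p - order a q"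
  have "((\<lambda>x. (x - a) ^ k * poly p0 x / poly q0 x) \<longlongrightarrow> (a - a) ^ k * poly p0 a / poly q0 a) (at a)"
    using q0(2) by (intro tendsto_intros)
  moreover have "eventually (\<lambda>x. (x - a) ^ k * poly p0 x / poly q0 x = poly p x / poly q x) (at a)"
    using eventually_neq_at_within[of a a]
  proof eventually_elim
    case (elim x)
    have "order a p = order a q + k" using assms(3) by (simp add: k_def)
    then show ?case using elim by (subst p0(1), subst q0(1)) (simp add: power_add)
  qed
  ultimately have "((\<lambda>x. poly p x / poly q x) \<longlongrightarrow> (a - a) ^ k * poly p0 a / poly q0 a) (at a)"
    by (rule Lim_transform_eventually)
  moreover have "(a - a) ^ k * poly p0 a / poly q0 a \<noteq> 0 \<longleftrightarrow> order a p = order a q"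
    using p0(2) q0(2) assms(3) by (auto simp: k_def)
  ultimately show ?thesis using that by blast
qed

lemma poly_quotient_tendsto_imp_order:
  fixes p q :: "'a::real_normed_field poly"
  assumes p: "p \<noteq> 0" and q: "q \<noteq> 0" and lim: "((\<lambda>x. poly p x / poly q x) \<longlongrightarrow> L) (at a)"
  shows "order a q \<le> order a p" and "L \<noteq> 0 \<longleftrightarrow> order a p = order a q"
proof -
  show le: "order a q \<le> order a p"
  proof (rule ccontr)
    assume "\<not> order a q \<le> order a p"
    then obtain L' where L': "((\<lambda>x. poly q x / poly p x) \<longlongrightarrow> L') (at a)" "L' = 0"
      using tendsto_poly_quotient[OF q p, of a] by (metis nat_le_linear)
    have "((\<lambda>x. poly p x / poly q x * (poly q x / poly p x)) \<longlongrightarrow> L * L') (at a)"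
      using lim L'(1) by (rule tendsto_mult)
    moreover have "eventually (\<lambda>x. poly p x / poly q x * (poly q x / poly p x) = 1) (at a)"
      using eventually_poly_nonzero_at[OF p] eventually_poly_nonzero_at[OF q]
      by eventually_elim simp
    ultimately have "((\<lambda>x. 1 :: 'a) \<longlongrightarrow> L * L') (at a)"
      by (rule Lim_transform_eventually)
    then show False using LIM_const_eq L'(2) by fastforce
  qed
  obtain L' where "((\<lambda>x. poly p x / poly q x) \<longlongrightarrow> L') (at a)" "L' \<noteq> 0 \<longleftrightarrow> order a p = order a q"
    using tendsto_poly_quotient[OF p q le] .
  moreover have "L = L'" using LIM_unique lim calculation(1) .
  ultimately show "L \<noteq> 0 \<longleftrightarrow> order a p = order a q" by simp
qed

lemma poly_linear_factor_mult:
  fixes p :: "'a::comm_ring_1 poly"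
  shows "poly ([:-a, 1:] * p) x = (x - a) * poly p x"
  by (simp add: algebra_simps)

lemma order_linear_factor_mult:
  fixes p :: "'a::idom poly"
  assumes "p \<noteq> 0"
  shows "order a ([:-a, 1:] * p) = Suc (order a p)"
proof -
  have "[:-a, 1:] * p \<noteq> 0" using assms by (simp only: mult_eq_0_iff) simp
  then have "order a ([:-a, 1:] * p) = order a [:-a, 1:] + order a p" by (rule order_mult)
  then show ?thesis using order_power_n_n[of a 1] by simp
qed

lemma pderiv_sum: "pderiv (sum f A) = (\<Sum>x\<in>A. pderiv (f x))"
  by (induction A rule: infinite_finite_induct) (simp_all add: pderiv_add)

lemma tendsto_log_derivative_order:
  fixes p :: "'a::real_normed_field poly"
  assumes "p \<noteq> 0"
  shows "((\<lambda>x. (x - a) * poly (pderiv p) x / poly p x) \<longlongrightarrow> of_nat (order a p)) (at a)"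
proof -
  define m where "m = order a p"
  obtain q where q: "p = [:-a, 1:] ^ m * q" "poly q a \<noteq> 0"
    using order_factor_decomp[OF assms] unfolding m_def .
  have power_deriv: "(x - a) * poly (pderiv ([:-a, 1:] ^ m)) x = of_nat m * (x - a) ^ m" for x
    unfolding pderiv_power by (cases m) (simp_all add: pderiv_pCons)
  have "((\<lambda>x. ((x - a) * poly (pderiv q) x + of_nat m * poly q x) / poly q x)
          \<longlongrightarrow> ((a - a) * poly (pderiv q) a + of_nat m * poly q a) / poly q a) (at a)"
    using q(2) by (intro tendsto_intros)
  moreover have "eventually (\<lambda>x. ((x - a) * poly (pderiv q) x + of_nat m * poly q x) / poly q x
                   = (x - a) * poly (pderiv p) x / poly p x) (at a)"
    using eventually_neq_at_within[of a a]
  proof eventually_elim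
    case (elim x)
    have "(x - a) * poly (pderiv p) x
        = (x - a) ^ m * ((x - a) * poly (pderiv q) x) + poly q x * ((x - a) * poly (pderiv ([:-a, 1:] ^ m)) x)"
      by (subst q(1)) (simp add: pderiv_mult algebra_simps)
    also have "\<dots> = (x - a) ^ m * ((x - a) * poly (pderiv q) x + of_nat m * poly q x)"
      unfolding power_deriv by (simp add: algebra_simps)
    finally show ?case using elim by (subst (2) q(1)) simp
  qed
  ultimately show ?thesis using q(2) unfolding m_def by (simp add: Lim_transform_eventually)
qed

section \<open>Resolvents of symmetric operators on finite sets\<close>

definition adj_op :: "'b set \<Rightarrow> ('b \<Rightarrow> 'b \<Rightarrow> bool) \<Rightarrow> ('b \<Rightarrow> real) \<Rightarrow> 'b \<Rightarrow> real" where
  "adj_op P R f q = (\<Sum>q'\<in>{q'\<in>P. R q q'}. f q')"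

lemma adj_op_self_adjoint:
  assumes "finite P" and "\<And>a b. R a b \<longleftrightarrow> R b a"
  shows "(\<Sum>q\<in>P. f q * adj_op P R g q) = (\<Sum>q\<in>P. g q * adj_op P R f q)"
proof -
  have "(\<Sum>q\<in>P. f q * adj_op P R g q) = (\<Sum>q\<in>P. \<Sum>q'\<in>{q'\<in>P. R q q'}. f q * g q')"
    by (simp add: adj_op_def sum_distrib_left)
  also have "\<dots> = (\<Sum>q'\<in>P. \<Sum>q\<in>{q\<in>P. R q q'}. f q * g q')"
    by (rule sum.swap_restrict[OF assms(1) assms(1)])
  also have "\<dots> = (\<Sum>q\<in>P. g q * adj_op P R f q)"
    by (simp add: adj_op_def sum_distrib_left assms(2) mult.commute)
  finally show ?thesis .
qed

context
  fixes P :: "'b set" and R :: "'b \<Rightarrow> 'b \<Rightarrow> bool" and \<theta> :: real and d :: nat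
    and w :: "real \<Rightarrow> 'b \<Rightarrow> real" and v e :: "'b \<Rightarrow> real"
  assumes finite: "finite P" and sym: "\<And>a b. R a b \<longleftrightarrow> R b a"
    and lim: "\<And>q. q \<in> P \<Longrightarrow> ((\<lambda>x. w x q) \<longlongrightarrow> v q) (at \<theta>)"
    and eq: "eventually (\<lambda>x. \<forall>q\<in>P. x * w x q - adj_op P R (w x) q = (x - \<theta>) ^ Suc d * e q) (at \<theta>)"
begin

lemma resolvent_limit_eigen:
  assumes q: "q \<in> P"
  shows "adj_op P R v q = \<theta> * v q"
proof -
  have lim_op: "((\<lambda>x. adj_op P R (w x) q) \<longlongrightarrow> adj_op P R v q) (at \<theta>)"
    unfolding adj_op_def by (intro tendsto_sum) (simp add: lim)
  have "((\<lambda>x. (x - \<theta>) ^ Suc d * e q) \<longlongrightarrow> (\<theta> - \<theta>) ^ Suc d * e q) (at \<theta>)"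
    by (intro tendsto_intros)
  moreover have "eventually (\<lambda>x. (x - \<theta>) ^ Suc d * e q = x * w x q - adj_op P R (w x) q) (at \<theta>)"
    using eq by eventually_elim (use q in auto)
  ultimately have "((\<lambda>x. x * w x q - adj_op P R (w x) q) \<longlongrightarrow> (\<theta> - \<theta>) ^ Suc d * e q) (at \<theta>)"
    by (rule Lim_transform_eventually)
  moreover have "((\<lambda>x. x * w x q - adj_op P R (w x) q) \<longlongrightarrow> \<theta> * v q - adj_op P R v q) (at \<theta>)"
    using q by (intro tendsto_intros lim lim_op)
  ultimately have "\<theta> * v q - adj_op P R v q = (\<theta> - \<theta>) ^ Suc d * e q"
    by (rule LIM_unique[rotated])
  then show ?thesis by simp
qed

lemma resolvent_limit_inner:
  assumes eigen: "\<And>q. q \<in> P \<Longrightarrow> adj_op P R k q = \<theta> * k q"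
  shows "(\<Sum>q\<in>P. v q * k q) = (if d = 0 then \<Sum>q\<in>P. e q * k q else 0)"
proof -
  define c where "c = (\<Sum>q\<in>P. e q * k q)"
  \<comment> \<open>Pairing with \<open>k\<close> and moving \<open>A\<close> across turns \<open>(x - A) w x\<close> into \<open>(x - \<theta>) w x\<close>.\<close>
  have "eventually (\<lambda>x. (x - \<theta>) ^ d * c = (\<Sum>q\<in>P. w x q * k q)) (at \<theta>)"
    using eq eventually_neq_at_within[of \<theta> \<theta>]
  proof eventually_elim
    case (elim x)
    have "(x - \<theta>) * ((x - \<theta>) ^ d * c) = (\<Sum>q\<in>P. (x - \<theta>) ^ Suc d * e q * k q)"
      by (simp add: c_def sum_distrib_left algebra_simps)
    also have "\<dots> = (\<Sum>q\<in>P. (x * w x q - adj_op P R (w x) q) * k q)"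
      using elim(1) by simp
    also have "\<dots> = x * (\<Sum>q\<in>P. w x q * k q) - (\<Sum>q\<in>P. k q * adj_op P R (w x) q)"
      by (simp add: sum_subtractf sum_distrib_left algebra_simps)
    also have "(\<Sum>q\<in>P. k q * adj_op P R (w x) q) = (\<Sum>q\<in>P. w x q * adj_op P R k q)"
      using finite sym by (rule adj_op_self_adjoint)
    also have "\<dots> = \<theta> * (\<Sum>q\<in>P. w x q * k q)"
      by (simp add: eigen sum_distrib_left algebra_simps)
    finally have "(x - \<theta>) * ((x - \<theta>) ^ d * c) = (x - \<theta>) * (\<Sum>q\<in>P. w x q * k q)"
      by (simp add: algebra_simps)
    then show ?case using elim(2) by simp
  qed
  moreover have "((\<lambda>x. (x - \<theta>) ^ d * c) \<longlongrightarrow> (\<theta> - \<theta>) ^ d * c) (at \<theta>)"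
    by (intro tendsto_intros)
  ultimately have "((\<lambda>x. \<Sum>q\<in>P. w x q * k q) \<longlongrightarrow> (\<theta> - \<theta>) ^ d * c) (at \<theta>)"
    by (rule Lim_transform_eventually[rotated])
  moreover have "((\<lambda>x. \<Sum>q\<in>P. w x q * k q) \<longlongrightarrow> (\<Sum>q\<in>P. v q * k q)) (at \<theta>)"
    by (intro tendsto_intros lim)
  ultimately show ?thesis
    using LIM_unique by (fastforce simp: c_def)
qed

end

text \<open>The rational functions \<open>n q / \<mu>\<close> are the entries of \<open>(x - A)\<^sup>-\<^sup>1 e\<^sub>r\<close>, where \<open>A\<close> is
  the adjacency operator of \<open>R\<close> on \<open>P\<close> and \<open>e\<^sub>r\<close> the indicator of \<open>r\<close>.\<close>

locale polynomial_resolvent =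
  fixes P :: "'b set" and R :: "'b \<Rightarrow> 'b \<Rightarrow> bool" and r :: 'b
    and n :: "'b \<Rightarrow> real poly" and \<mu> :: "real poly" and \<theta> :: real
  assumes finite_P: "finite P" and sym_R: "R a b \<longleftrightarrow> R b a" and root_in_P: "r \<in> P"
    and \<mu>_nonzero: "\<mu> \<noteq> 0" and n_nonzero: "q \<in> P \<Longrightarrow> n q \<noteq> 0"
    and resolvent_eq:
      "q \<in> P \<Longrightarrow> [:0, 1:] * n q - (\<Sum>q'\<in>{q'\<in>P. R q q'}. n q') = (if q = r then \<mu> else 0)"
begin

definition scaled_resolvent :: "nat \<Rightarrow> real \<Rightarrow> 'b \<Rightarrow> real" where
  "scaled_resolvent c x q = (x - \<theta>) ^ c * poly (n q) x / poly \<mu> x"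

lemma scaled_resolvent_eq:
  "eventually (\<lambda>x. \<forall>q\<in>P. x * scaled_resolvent c x q - adj_op P R (scaled_resolvent c x) q
                         = (x - \<theta>) ^ c * (if q = r then 1 else 0)) (at \<theta>)"
  using eventually_poly_nonzero_at[OF \<mu>_nonzero]
proof eventually_elim
  case (elim x)
  show ?case
  proof
    fix q assume q: "q \<in> P"
    have "x * poly (n q) x - (\<Sum>q'\<in>{q'\<in>P. R q q'}. poly (n q') x) = (if q = r then poly \<mu> x else 0)"
      using arg_cong[OF resolvent_eq[OF q], of "\<lambda>p. poly p x"] by (simp add: poly_sum)
    moreover have "x * scaled_resolvent c x q - adj_op P R (scaled_resolvent c x) q
        = (x - \<theta>) ^ c * (x * poly (n q) x - (\<Sum>q'\<in>{q'\<in>P. R q q'}. poly (n q') x)) / poly \<mu> x"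
      by (simp add: scaled_resolvent_def adj_op_def sum_divide_distrib sum_distrib_left
          diff_divide_distrib algebra_simps)
    ultimately show "x * scaled_resolvent c x q - adj_op P R (scaled_resolvent c x) q
        = (x - \<theta>) ^ c * (if q = r then 1 else 0)"
      using elim by simp
  qed
qed

lemma scaled_resolvent_tendsto:
  assumes "\<And>q. q \<in> P \<Longrightarrow> order \<theta> \<mu> \<le> c + order \<theta> (n q)"
  shows "\<exists>v. \<forall>q\<in>P. ((\<lambda>x. scaled_resolvent c x q) \<longlongrightarrow> v q) (at \<theta>)
                   \<and> (v q \<noteq> 0 \<longleftrightarrow> c + order \<theta> (n q) = order \<theta> \<mu>)"
proof (intro bchoice ballI)
  fix q assume q: "q \<in> P"
  have nonzero: "[:-\<theta>, 1:] ^ c * n q \<noteq> 0" using n_nonzero[OF q] by simp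
  then have order: "order \<theta> ([:-\<theta>, 1:] ^ c * n q) = c + order \<theta> (n q)"
    by (simp add: order_mult order_power_n_n)
  have quotient: "(\<lambda>x. poly ([:-\<theta>, 1:] ^ c * n q) x / poly \<mu> x) = (\<lambda>x. scaled_resolvent c x q)"
    by (simp add: scaled_resolvent_def fun_eq_iff)
  obtain L where "((\<lambda>x. scaled_resolvent c x q) \<longlongrightarrow> L) (at \<theta>)"
    and "L \<noteq> 0 \<longleftrightarrow> c + order \<theta> (n q) = order \<theta> \<mu>"
    using tendsto_poly_quotient[OF nonzero \<mu>_nonzero assms[OF q, folded order]]
    unfolding quotient order .
  then show "\<exists>L. ((\<lambda>x. scaled_resolvent c x q) \<longlongrightarrow> L) (at \<theta>) \<and> (L \<noteq> 0 \<longleftrightarrow> c + order \<theta> (n q) = order \<theta> \<mu>)"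
    by blast
qed

text \<open>The resolvent has at most simple poles: at a pole of higher order the leading
  coefficient would be a \<open>\<theta>\<close>-eigenvector orthogonal to itself.\<close>

lemma order_le_Suc_order:
  assumes "q \<in> P"
  shows "order \<theta> \<mu> \<le> Suc (order \<theta> (n q))"
proof (rule ccontr)
  assume q: "\<not> order \<theta> \<mu> \<le> Suc (order \<theta> (n q))"
  define gap where "gap q = order \<theta> \<mu> - Suc (order \<theta> (n q))" for q
  define d where "d = Max (gap ` P)"
  have gap_le: "gap q \<le> d" if "q \<in> P" for q
    using finite_P that unfolding d_def by simp
  have "d \<in> gap ` P" unfolding d_def using finite_P root_in_P by (intro Max_in) auto
  then obtain q0 where q0: "q0 \<in> P" "gap q0 = d" by blast
  have d_pos: "d > 0" using gap_le[OF assms] q unfolding gap_def by simp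
  have bound: "order \<theta> \<mu> \<le> Suc d + order \<theta> (n q)" if "q \<in> P" for q
    using gap_le[OF that] unfolding gap_def by simp
  obtain v where v_props: "\<forall>q\<in>P. ((\<lambda>x. scaled_resolvent (Suc d) x q) \<longlongrightarrow> v q) (at \<theta>)
                                  \<and> (v q \<noteq> 0 \<longleftrightarrow> Suc d + order \<theta> (n q) = order \<theta> \<mu>)"
    using scaled_resolvent_tendsto[OF bound] by blast
  then have v: "\<And>q. q \<in> P \<Longrightarrow> ((\<lambda>x. scaled_resolvent (Suc d) x q) \<longlongrightarrow> v q) (at \<theta>)"
    and v_nonzero: "\<And>q. q \<in> P \<Longrightarrow> v q \<noteq> 0 \<longleftrightarrow> Suc d + order \<theta> (n q) = order \<theta> \<mu>"
    by auto
  note limit = finite_P sym_R v scaled_resolvent_eq[of "Suc d"]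
  have "(\<Sum>q\<in>P. v q * v q) = 0"
    using resolvent_limit_inner[OF limit resolvent_limit_eigen[OF limit]] d_pos by simp
  then have "v q0 = 0" using finite_P q0(1) by (simp add: sum_nonneg_eq_0_iff)
  moreover have "v q0 \<noteq> 0" using v_nonzero[OF q0(1)] q0(2) d_pos unfolding gap_def by simp
  ultimately show False by contradiction
qed

definition residue :: "'b \<Rightarrow> real" where
  "residue q = (if q \<in> P then Lim (at \<theta>) (\<lambda>x. (x - \<theta>) * poly (n q) x / poly \<mu> x) else 0)"

lemma residue_outside: "q \<notin> P \<Longrightarrow> residue q = 0"
  by (simp add: residue_def)

lemma tendsto_scaled_resolvent_residue:
  assumes "q \<in> P"
  shows "((\<lambda>x. scaled_resolvent (Suc 0) x q) \<longlongrightarrow> residue q) (at \<theta>)"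
proof -
  have "order \<theta> \<mu> \<le> Suc 0 + order \<theta> (n q)" if "q \<in> P" for q
    using order_le_Suc_order[OF that] by simp
  then obtain L where "((\<lambda>x. scaled_resolvent (Suc 0) x q) \<longlongrightarrow> L) (at \<theta>)"
    using scaled_resolvent_tendsto assms by blast
  moreover have "(\<lambda>x. scaled_resolvent (Suc 0) x q) = (\<lambda>x. (x - \<theta>) * poly (n q) x / poly \<mu> x)"
    by (simp add: scaled_resolvent_def fun_eq_iff)
  ultimately show ?thesis using assms by (simp add: residue_def tendsto_Lim)
qed

lemma tendsto_residue:
  "q \<in> P \<Longrightarrow> ((\<lambda>x. (x - \<theta>) * poly (n q) x / poly \<mu> x) \<longlongrightarrow> residue q) (at \<theta>)"
  using tendsto_scaled_resolvent_residue by (simp add: scaled_resolvent_def)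

lemmas residue_limit = finite_P sym_R tendsto_scaled_resolvent_residue scaled_resolvent_eq[of "Suc 0"]

lemma residue_eigen: "q \<in> P \<Longrightarrow> adj_op P R residue q = \<theta> * residue q"
  using residue_limit by (rule resolvent_limit_eigen)

lemma residue_inner:
  assumes "\<And>q. q \<in> P \<Longrightarrow> adj_op P R k q = \<theta> * k q"
  shows "(\<Sum>q\<in>P. residue q * k q) = k r"
proof -
  have "(\<Sum>q\<in>P. (if q = r then 1 else 0) * k q) = (\<Sum>q\<in>P. if q = r then k q else 0)"
    by (rule sum.cong) auto
  then show ?thesis
    using resolvent_limit_inner[OF residue_limit assms] finite_P root_in_P by simp
qed

lemma residue_root_nonneg: "residue r \<ge> 0"
proof -
  have "residue r = (\<Sum>q\<in>P. residue q * residue q)"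
    using residue_inner[OF residue_eigen] by simp
  then show ?thesis by (simp add: sum_nonneg)
qed

end

section \<open>The matching polynomial\<close>

definition graph_edges :: "'a set \<Rightarrow> ('a \<Rightarrow> 'a \<Rightarrow> bool) \<Rightarrow> 'a set set" where
  "graph_edges S E = {{a, b} | a b. a \<in> S \<and> b \<in> S \<and> E a b}"

definition matchings :: "'a set \<Rightarrow> ('a \<Rightarrow> 'a \<Rightarrow> bool) \<Rightarrow> 'a set set set" where
  "matchings S E = {M. M \<subseteq> graph_edges S E \<and> pairwise disjnt M}"

definition matching_poly :: "'a set \<Rightarrow> ('a \<Rightarrow> 'a \<Rightarrow> bool) \<Rightarrow> real poly" where
  "matching_poly S E = (\<Sum>M\<in>matchings S E. monom ((-1) ^ card M) (card S - 2 * card M))"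

lemma finite_graph_edges: "finite S \<Longrightarrow> finite (graph_edges S E)"
proof -
  assume "finite S"
  moreover have "graph_edges S E \<subseteq> Pow S" unfolding graph_edges_def by auto
  ultimately show ?thesis by (meson finite_Pow_iff finite_subset)
qed

lemma finite_matchings: "finite S \<Longrightarrow> finite (matchings S E)"
proof -
  assume "finite S"
  moreover have "matchings S E \<subseteq> Pow (graph_edges S E)" unfolding matchings_def by auto
  ultimately show ?thesis by (meson finite_Pow_iff finite_graph_edges finite_subset)
qed

lemma finite_matching: "finite S \<Longrightarrow> M \<in> matchings S E \<Longrightarrow> finite M"
  unfolding matchings_def by (auto intro: finite_subset finite_graph_edges)

lemma Union_matching_subset: "M \<in> matchings S E \<Longrightarrow> \<Union>M \<subseteq> S"
  unfolding matchings_def graph_edges_def by auto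

lemma matchings_Diff: "matchings (S - X) E = {M \<in> matchings S E. \<Union>M \<inter> X = {}}"
  unfolding matchings_def graph_edges_def by blast

locale simple_graph =
  fixes E :: "'a \<Rightarrow> 'a \<Rightarrow> bool"
  assumes sym: "E x y \<Longrightarrow> E y x" and irrefl: "\<not> E x x"
begin

lemma card_graph_edge: "e \<in> graph_edges S E \<Longrightarrow> card e = 2"
  unfolding graph_edges_def by (auto simp: card_insert_if irrefl)

lemma card_Union_matching:
  assumes "finite S" "M \<in> matchings S E"
  shows "card (\<Union>M) = 2 * card M"
proof (rule card_partition[symmetric])
  show "finite M" using finite_matching[OF assms] .
  show "finite (\<Union>M)" using Union_matching_subset[OF assms(2)] assms(1) by (rule finite_subset)
  show "card e = 2" if "e \<in> M" for e
    using assms(2) that card_graph_edge unfolding matchings_def by blast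
  show "e \<inter> e' = {}" if "e \<in> M" "e' \<in> M" "e \<noteq> e'" for e e'
    using assms(2) that unfolding matchings_def pairwise_def disjnt_def by blast
qed

lemma matching_card_le:
  assumes "finite S" "M \<in> matchings S E"
  shows "2 * card M \<le> card S"
  using card_mono[OF assms(1) Union_matching_subset[OF assms(2)]] card_Union_matching[OF assms]
  by simp

lemma matching_edge_at:
  assumes "M \<in> matchings S E" "u \<in> \<Union>M"
  obtains w where "w \<in> S" "E u w" "{u, w} \<in> M"
proof -
  obtain a b where ab: "{a, b} \<in> M" "u \<in> {a, b}" "a \<in> S" "b \<in> S" "E a b"
    using assms unfolding matchings_def graph_edges_def by blast
  show ?thesis
  proof (cases "u = a")
    case True
    then show ?thesis using that ab by blast
  next
    case False
    then show ?thesis using that[of a] ab sym by (auto simp: insert_commute)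
  qed
qed

lemma matching_edge_at_unique:
  assumes "M \<in> matchings S E" "{u, w} \<in> M" "{u, w'} \<in> M"
  shows "w = w'"
proof -
  have "{u, w} = {u, w'}"
  proof (rule ccontr)
    assume "{u, w} \<noteq> {u, w'}"
    then have "disjnt {u, w} {u, w'}"
      using assms unfolding matchings_def by (auto dest: pairwiseD)
    then show False by (simp add: disjnt_def)
  qed
  then show ?thesis by (auto simp: doubleton_eq_iff)
qed

lemma matchings_containing_edge:
  assumes "u \<in> S" "w \<in> S" "E u w"
  shows "{M \<in> matchings S E. {u, w} \<in> M} = insert {u, w} ` matchings (S - {u} - {w}) E"
proof (intro equalityI subsetI)
  fix M assume M: "M \<in> {M \<in> matchings S E. {u, w} \<in> M}"
  have "disjnt e {u, w}" if "e \<in> M - {{u, w}}" for e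
    using M that unfolding matchings_def by (auto dest: pairwiseD)
  then have "\<Union>(M - {{u, w}}) \<inter> {u, w} = {}"
    by (auto simp: disjnt_def)
  moreover have "M - {{u, w}} \<in> matchings S E"
    using M unfolding matchings_def by (auto intro: pairwise_subset)
  ultimately have "M - {{u, w}} \<in> matchings (S - {u} - {w}) E"
    unfolding Diff_insert2[symmetric] matchings_Diff by simp
  then show "M \<in> insert {u, w} ` matchings (S - {u} - {w}) E"
    using M by (auto intro!: image_eqI[of _ _ "M - {{u, w}}"])
next
  fix M assume "M \<in> insert {u, w} ` matchings (S - {u} - {w}) E"
  then obtain M' where M: "M = insert {u, w} M'" and M': "M' \<in> matchings S E" "\<Union>M' \<inter> {u, w} = {}"
    unfolding Diff_insert2[symmetric] matchings_Diff by blast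
  have "{u, w} \<in> graph_edges S E" using assms unfolding graph_edges_def by blast
  moreover have "disjnt {u, w} e" if "e \<in> M'" for e
    using M'(2) that by (auto simp: disjnt_def)
  ultimately show "M \<in> {M \<in> matchings S E. {u, w} \<in> M}"
    using M' unfolding M matchings_def by (auto simp: pairwise_insert disjnt_sym)
qed

lemma matchings_split_at:
  "matchings S E = matchings (S - {u}) E \<union> (\<Union>w\<in>{w\<in>S - {u}. E u w}. {M \<in> matchings S E. {u, w} \<in> M})"
proof (intro equalityI subsetI)
  fix M assume M: "M \<in> matchings S E"
  show "M \<in> matchings (S - {u}) E \<union> (\<Union>w\<in>{w\<in>S - {u}. E u w}. {M \<in> matchings S E. {u, w} \<in> M})"
  proof (cases "u \<in> \<Union>M")
    case True
    then obtain w where "w \<in> S" "E u w" "{u, w} \<in> M" by (rule matching_edge_at[OF M])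
    then show ?thesis using M irrefl by blast
  next
    case False
    then show ?thesis using M unfolding matchings_Diff by blast
  qed
qed (auto simp: matchings_Diff)

lemma sum_matchings_avoiding:
  assumes S: "finite S" and u: "u \<in> S"
  shows "(\<Sum>M\<in>matchings (S - {u}) E. monom ((-1::real) ^ card M) (card S - 2 * card M))
    = [:0, 1:] * matching_poly (S - {u}) E"
  unfolding matching_poly_def sum_distrib_left
proof (rule sum.cong[OF refl])
  fix M assume "M \<in> matchings (S - {u}) E"
  then have "2 * card M \<le> card (S - {u})" using matching_card_le S by simp
  then have "card S - 2 * card M = Suc (card (S - {u}) - 2 * card M)"
    using card_Suc_Diff1[OF S u] by linarith
  then show "monom ((-1::real) ^ card M) (card S - 2 * card M)
      = [:0, 1:] * monom ((-1) ^ card M) (card (S - {u}) - 2 * card M)"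
    by (simp add: monom_Suc)
qed

lemma sum_matchings_containing_edge:
  assumes S: "finite S" and u: "u \<in> S" and w: "w \<in> S - {u}" "E u w"
  shows "(\<Sum>M\<in>{M \<in> matchings S E. {u, w} \<in> M}. monom ((-1::real) ^ card M) (card S - 2 * card M))
    = - matching_poly (S - {u} - {w}) E"
proof -
  let ?S' = "S - {u} - {w}"
  have card_S': "card ?S' = card S - 2" using S u w by (simp add: card_Diff_singleton)
  have not_in: "{u, w} \<notin> M" if "M \<in> matchings ?S' E" for M
    using Union_matching_subset[OF that] by blast
  have "(\<Sum>M\<in>{M \<in> matchings S E. {u, w} \<in> M}. monom ((-1::real) ^ card M) (card S - 2 * card M))
      = (\<Sum>M\<in>matchings ?S' E. monom ((-1) ^ card (insert {u, w} M)) (card S - 2 * card (insert {u, w} M)))"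
    using w unfolding matchings_containing_edge[OF u DiffD1[OF w(1)] w(2)]
    by (subst sum.reindex) (auto intro!: inj_onI simp: not_in insert_ident)
  also have "\<dots> = (\<Sum>M\<in>matchings ?S' E. - monom ((-1) ^ card M) (card ?S' - 2 * card M))"
  proof (rule sum.cong[OF refl])
    fix M assume M: "M \<in> matchings ?S' E"
    have "card (insert {u, w} M) = Suc (card M)"
      using not_in[OF M] finite_matching[OF _ M] S by simp
    moreover have "2 * card M \<le> card ?S'" using matching_card_le M S by simp
    ultimately show "monom ((-1::real) ^ card (insert {u, w} M)) (card S - 2 * card (insert {u, w} M))
        = - monom ((-1) ^ card M) (card ?S' - 2 * card M)"
      using card_S' by (simp add: minus_monom)
  qed
  finally show ?thesis by (simp add: matching_poly_def sum_negf)
qed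

lemma matching_poly_rec:
  assumes S: "finite S" and u: "u \<in> S"
  shows "matching_poly S E
    = [:0, 1:] * matching_poly (S - {u}) E - (\<Sum>w\<in>{w\<in>S - {u}. E u w}. matching_poly (S - {u} - {w}) E)"
proof -
  define N where "N = {w\<in>S - {u}. E u w}"
  define C where "C w = {M \<in> matchings S E. {u, w} \<in> M}" for w
  define t where "t M = monom ((-1::real) ^ card M) (card S - 2 * card M)" for M :: "'a set set"
  have finite_N: "finite N" using S unfolding N_def by simp
  have finite_C: "finite (C w)" for w
    using finite_matchings[OF S] unfolding C_def by simp
  have disjoint: "matchings (S - {u}) E \<inter> (\<Union>w\<in>N. C w) = {}"
    unfolding matchings_Diff C_def by blast
  have disjoint_C: "C w \<inter> C w' = {}" if "w \<noteq> w'" for w w'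
    using matching_edge_at_unique that unfolding C_def by blast
  have split: "matchings S E = matchings (S - {u}) E \<union> (\<Union>w\<in>N. C w)"
    using matchings_split_at[of S u] unfolding N_def C_def .
  have "matching_poly S E = sum t (matchings (S - {u}) E) + sum t (\<Union>w\<in>N. C w)"
    unfolding matching_poly_def t_def[symmetric] split
    by (rule sum.union_disjoint) (use S finite_N finite_C disjoint in \<open>auto simp: finite_matchings\<close>)
  also have "sum t (\<Union>w\<in>N. C w) = (\<Sum>w\<in>N. sum t (C w))"
    by (rule sum.UNION_disjoint) (use finite_N finite_C disjoint_C in auto)
  finally show ?thesis
    using sum_matchings_avoiding[OF S u] sum_matchings_containing_edge[OF S u]
    by (simp add: t_def C_def N_def sum_negf)
qed

lemma pderiv_matching_poly:
  assumes S: "finite S"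
  shows "pderiv (matching_poly S E) = (\<Sum>v\<in>S. matching_poly (S - {v}) E)"
proof -
  define c where "c M = (-1::real) ^ card M" for M :: "'a set set"
  have "(\<Sum>v\<in>S. matching_poly (S - {v}) E)
      = (\<Sum>v\<in>S. \<Sum>M\<in>{M\<in>matchings S E. v \<notin> \<Union>M}. monom (c M) (card S - 2 * card M - 1))"
  proof (rule sum.cong[OF refl])
    fix v assume v: "v \<in> S"
    have "matchings (S - {v}) E = {M\<in>matchings S E. v \<notin> \<Union>M}"
      unfolding matchings_Diff by blast
    then show "matching_poly (S - {v}) E
        = (\<Sum>M\<in>{M\<in>matchings S E. v \<notin> \<Union>M}. monom (c M) (card S - 2 * card M - 1))"
      using v S by (simp add: matching_poly_def c_def)
  qed
  also have "\<dots> = (\<Sum>M\<in>matchings S E. \<Sum>v\<in>{v\<in>S. v \<notin> \<Union>M}. monom (c M) (card S - 2 * card M - 1))"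
    by (rule sum.swap_restrict[OF S finite_matchings[OF S]])
  also have "\<dots> = (\<Sum>M\<in>matchings S E. pderiv (monom (c M) (card S - 2 * card M)))"
  proof (rule sum.cong[OF refl])
    fix M assume M: "M \<in> matchings S E"
    have "{v\<in>S. v \<notin> \<Union>M} = S - \<Union>M" by blast
    then have "card {v\<in>S. v \<notin> \<Union>M} = card S - 2 * card M"
      using card_Diff_subset[OF finite_subset[OF Union_matching_subset[OF M] S] Union_matching_subset[OF M]]
        card_Union_matching[OF S M] by simp
    then show "(\<Sum>v\<in>{v\<in>S. v \<notin> \<Union>M}. monom (c M) (card S - 2 * card M - 1))
        = pderiv (monom (c M) (card S - 2 * card M))"
      by (simp add: pderiv_monom of_nat_mult_conv_smult smult_monom)
  qed
  also have "\<dots> = pderiv (matching_poly S E)"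
    by (simp add: matching_poly_def pderiv_sum c_def)
  finally show ?thesis ..
qed

lemma coeff_matching_poly_card:
  assumes S: "finite S"
  shows "coeff (matching_poly S E) (card S) = 1"
proof -
  have "coeff (matching_poly S E) (card S) = (\<Sum>M\<in>matchings S E. if M = {} then 1 else 0)"
    unfolding matching_poly_def coeff_sum coeff_monom
  proof (rule sum.cong[OF refl])
    fix M assume M: "M \<in> matchings S E"
    have "card S - 2 * card M = card S \<longleftrightarrow> card M = 0"
      using matching_card_le[OF S M] by arith
    then have "card S - 2 * card M = card S \<longleftrightarrow> M = {}"
      using finite_matching[OF S M] by simp
    then show "(if card S - 2 * card M = card S then (-1) ^ card M else 0) = (if M = {} then 1 else 0)"
      by auto
  qed
  also have "\<dots> = 1"
    using finite_matchings[OF S] by (simp add: matchings_def)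
  finally show ?thesis .
qed

lemma matching_poly_nonzero: "finite S \<Longrightarrow> matching_poly S E \<noteq> 0"
  using coeff_matching_poly_card by force

end

section \<open>The path tree\<close>

lemma successively_iff_nth:
  "successively P xs \<longleftrightarrow> (\<forall>i. Suc i < length xs \<longrightarrow> P (xs ! i) (xs ! Suc i))"
  by (induction P xs rule: successively.induct) (auto simp: nth_Cons less_Suc_eq_0_disj)

lemma path_tree_vertices_iff:
  "xs \<in> path_tree_vertices V E u \<longleftrightarrow>
     xs \<noteq> [] \<and> hd xs = u \<and> distinct xs \<and> set xs \<subseteq> V \<and> successively E xs"
  unfolding path_tree_vertices_def successively_iff_nth by simp

lemma root_in_path_tree: "u \<in> V \<Longrightarrow> [u] \<in> path_tree_vertices V E u"
  by (simp add: path_tree_vertices_iff)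

lemma snoc_in_path_tree_iff:
  assumes "xs \<in> path_tree_vertices V E u"
  shows "xs @ [w] \<in> path_tree_vertices V E u \<longleftrightarrow> w \<in> V - set xs \<and> E (last xs) w"
  using assms by (auto simp: path_tree_vertices_iff successively_append_iff)

lemma butlast_in_path_tree:
  assumes xs: "xs \<in> path_tree_vertices V E u" and "xs \<noteq> [u]"
  shows "butlast xs \<in> path_tree_vertices V E u" and "xs = butlast xs @ [last xs]"
proof -
  obtain ys w where xs_eq: "xs = ys @ [w]"
    using xs by (cases xs rule: rev_cases) (auto simp: path_tree_vertices_iff)
  have "ys \<noteq> []" using xs \<open>xs \<noteq> [u]\<close> by (auto simp: xs_eq path_tree_vertices_iff)
  then show "butlast xs \<in> path_tree_vertices V E u"
    using xs by (auto simp: xs_eq path_tree_vertices_iff successively_append_iff)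
  show "xs = butlast xs @ [last xs]" by (simp add: xs_eq)
qed

lemma finite_path_tree_vertices:
  assumes "finite V"
  shows "finite (path_tree_vertices V E u)"
proof (rule finite_subset)
  show "path_tree_vertices V E u \<subseteq> {xs. set xs \<subseteq> V \<and> length xs \<le> card V}"
    using assms by (auto simp: path_tree_vertices_iff distinct_card[symmetric] card_mono)
  show "finite {xs. set xs \<subseteq> V \<and> length xs \<le> card V}"
    using assms by (rule finite_lists_length_le)
qed

lemma path_tree_neighbours:
  assumes xs: "xs \<in> path_tree_vertices V E u"
  shows "{ys \<in> path_tree_vertices V E u. path_tree_adj xs ys}
    = (\<lambda>w. xs @ [w]) ` {w \<in> V - set xs. E (last xs) w} \<union> (if xs = [u] then {} else {butlast xs})"
proof -
  have "ys @ [w] \<noteq> [u]" if "ys \<in> path_tree_vertices V E u" for ys w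
    using that by (auto simp: path_tree_vertices_iff)
  then show ?thesis
    using xs snoc_in_path_tree_iff[OF xs] butlast_in_path_tree[OF xs]
    unfolding path_tree_adj_def by (auto simp: snoc_eq_iff_butlast dest: arg_cong[where f = length])
qed

lemma sum_path_tree_neighbours:
  assumes "finite V" and xs: "xs \<in> path_tree_vertices V E u"
  shows "(\<Sum>ys\<in>{ys \<in> path_tree_vertices V E u. path_tree_adj xs ys}. f ys)
    = (\<Sum>w\<in>{w \<in> V - set xs. E (last xs) w}. f (xs @ [w])) + (if xs = [u] then 0 else f (butlast xs))"
  unfolding path_tree_neighbours[OF xs] using assms(1)
  by (subst sum.union_disjoint) (auto simp: sum.reindex inj_on_def dest: arg_cong[where f = length])

lemma path_tree_op_eq_adj_op: "path_tree_op V E u = adj_op (path_tree_vertices V E u) path_tree_adj"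
  by (simp add: path_tree_op_def adj_op_def fun_eq_iff)

lemma path_tree_adj_sym: "path_tree_adj xs ys \<longleftrightarrow> path_tree_adj ys xs"
  unfolding path_tree_adj_def by blast

lemma matching_atom_eq_THE:
  fixes V :: "'a set" and E :: "'a \<Rightarrow> 'a \<Rightarrow> bool" and u :: 'a and \<theta> :: real
  defines "P \<equiv> path_tree_vertices V E u" and "K \<equiv> eigenspace_pt V E u \<theta>"
  assumes "finite V" "u \<in> V"
  shows "matching_atom V E u \<theta> = (THE p. p \<in> K \<and> (\<forall>g\<in>K. (\<Sum>xs\<in>P. p xs * g xs) = g [u])) [u]"
proof -
  define e where "e xs = (if xs = [u] \<and> xs \<in> P then 1 else 0 :: real)" for xs
  have "finite P" unfolding P_def using assms(3) by (rule finite_path_tree_vertices)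
  moreover have "[u] \<in> P" unfolding P_def using assms(4) by (rule root_in_path_tree)
  moreover have "(\<Sum>xs\<in>P. e xs * g xs) = (\<Sum>xs\<in>P. if xs = [u] then g xs else 0)" for g
    by (rule sum.cong) (auto simp: e_def)
  ultimately have e_inner: "(\<Sum>xs\<in>P. e xs * g xs) = g [u]" for g
    by simp
  have residual: "(\<Sum>xs\<in>P. (e xs - p xs) * g xs) = 0 \<longleftrightarrow> (\<Sum>xs\<in>P. p xs * g xs) = g [u]" for p g
    using e_inner[of g] by (auto simp: left_diff_distrib sum_subtractf)
  have "matching_atom V E u \<theta>
      = (\<Sum>xs\<in>P. e xs * (THE p. p \<in> K \<and> (\<forall>g\<in>K. (\<Sum>xs\<in>P. (e xs - p xs) * g xs) = 0)) xs)"
    unfolding matching_atom_def Let_def P_def K_def e_def ..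
  then show ?thesis unfolding residual e_inner .
qed

lemma matching_atom_eqI:
  fixes V :: "'a set" and E :: "'a \<Rightarrow> 'a \<Rightarrow> bool" and u :: 'a and \<theta> :: real
    and \<rho> :: "'a list \<Rightarrow> real"
  defines "P \<equiv> path_tree_vertices V E u"
  assumes "finite V" "u \<in> V"
    and support: "\<And>xs. xs \<notin> P \<Longrightarrow> \<rho> xs = 0"
    and eigen: "\<And>xs. xs \<in> P \<Longrightarrow> path_tree_op V E u \<rho> xs = \<theta> * \<rho> xs"
    and projection: "\<And>k. k \<in> eigenspace_pt V E u \<theta> \<Longrightarrow> (\<Sum>xs\<in>P. \<rho> xs * k xs) = k [u]"
  shows "matching_atom V E u \<theta> = \<rho> [u]"
proof -
  define K where "K = eigenspace_pt V E u \<theta>"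
  have K_iff: "g \<in> K \<longleftrightarrow> (\<forall>xs. xs \<notin> P \<longrightarrow> g xs = 0) \<and> (\<forall>xs\<in>P. path_tree_op V E u g xs = \<theta> * g xs)" for g
    unfolding K_def eigenspace_pt_def P_def by simp
  have "finite P" unfolding P_def using assms(2) by (rule finite_path_tree_vertices)
  have "(THE p. p \<in> K \<and> (\<forall>g\<in>K. (\<Sum>xs\<in>P. p xs * g xs) = g [u])) = \<rho>"
  proof (rule the_equality)
    have "\<rho> \<in> K" unfolding K_iff using support eigen by simp
    moreover have "\<forall>g\<in>K. (\<Sum>xs\<in>P. \<rho> xs * g xs) = g [u]" using projection unfolding K_def by simp
    ultimately show "\<rho> \<in> K \<and> (\<forall>g\<in>K. (\<Sum>xs\<in>P. \<rho> xs * g xs) = g [u])" ..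
  next
    fix p assume p: "p \<in> K \<and> (\<forall>g\<in>K. (\<Sum>xs\<in>P. p xs * g xs) = g [u])"
    define \<delta> where "\<delta> xs = p xs - \<rho> xs" for xs
    have "\<delta> \<in> K"
      using p support eigen unfolding K_iff \<delta>_def path_tree_op_def by (simp add: sum_subtractf algebra_simps)
    then have "(\<Sum>xs\<in>P. \<delta> xs * \<delta> xs) = 0"
      using p projection unfolding K_def[symmetric] \<delta>_def by (simp add: left_diff_distrib sum_subtractf)
    then have "\<forall>xs\<in>P. \<delta> xs = 0" using \<open>finite P\<close> by (simp add: sum_nonneg_eq_0_iff)
    then show "p = \<rho>" using p support unfolding K_iff \<delta>_def by (metis eq_iff_diff_eq_0 ext)
  qed
  then show ?thesis using matching_atom_eq_THE[OF assms(2,3)] unfolding K_def P_def by simp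
qed

section \<open>Matching atoms and root multiplicities\<close>

context simple_graph
begin

text \<open>Godsil's identity: the recurrence at the last vertex of the path \<open>q\<close> shows that
  \<open>q \<mapsto> matching_poly (S - set q) E\<close> satisfies the resolvent equation on the path tree.\<close>

lemma path_tree_matching_poly_eq:
  assumes S: "finite S" and q: "q \<in> path_tree_vertices S E v"
  shows "[:0, 1:] * matching_poly (S - set q) E
           - (\<Sum>q'\<in>{q'\<in>path_tree_vertices S E v. path_tree_adj q q'}. matching_poly (S - set q') E)
         = (if q = [v] then matching_poly S E else 0)"
proof -
  have snoc_diff: "S - set (q @ [w]) = S - set q - {w}" for w by auto
  have neighbours:
    "(\<Sum>q'\<in>{q'\<in>path_tree_vertices S E v. path_tree_adj q q'}. matching_poly (S - set q') E)
     = (\<Sum>w\<in>{w \<in> S - set q. E (last q) w}. matching_poly (S - set q - {w}) E)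
       + (if q = [v] then 0 else matching_poly (S - set (butlast q)) E)"
    using sum_path_tree_neighbours[OF S q, of "\<lambda>q'. matching_poly (S - set q') E"]
    by (simp only: snoc_diff)
  show ?thesis
  proof (cases "q = [v]")
    case True
    then have "v \<in> S" using q by (simp add: path_tree_vertices_iff)
    then show ?thesis using True neighbours matching_poly_rec[OF S] by simp
  next
    case False
    define b l where "b = butlast q" and "l = last q"
    have q_eq: "q = b @ [l]" using butlast_in_path_tree(2)[OF q False] unfolding b_def l_def .
    have "l \<in> S - set b" using q unfolding q_eq by (auto simp: path_tree_vertices_iff)
    moreover have "S - set b - {l} = S - set q" unfolding q_eq by auto
    ultimately have "matching_poly (S - set b) E = [:0, 1:] * matching_poly (S - set q) E
        - (\<Sum>w\<in>{w \<in> S - set q. E l w}. matching_poly (S - set q - {w}) E)"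
      using matching_poly_rec[of "S - set b" l] S by simp
    then show ?thesis using False neighbours unfolding b_def l_def by simp
  qed
qed

lemma matching_poly_resolvent:
  assumes "finite S" "v \<in> S"
  shows "polynomial_resolvent (path_tree_vertices S E v) path_tree_adj [v]
           (\<lambda>q. matching_poly (S - set q) E) (matching_poly S E)"
proof unfold_locales
  show "finite (path_tree_vertices S E v)" using assms(1) by (rule finite_path_tree_vertices)
  show "path_tree_adj xs ys \<longleftrightarrow> path_tree_adj ys xs" for xs ys :: "'a list"
    by (rule path_tree_adj_sym)
  show "[v] \<in> path_tree_vertices S E v" using assms(2) by (rule root_in_path_tree)
  show "matching_poly S E \<noteq> 0" using assms(1) by (rule matching_poly_nonzero)
  show "matching_poly (S - set q) E \<noteq> 0" for q using assms(1) by (simp add: matching_poly_nonzero)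
  show "[:0, 1:] * matching_poly (S - set q) E
          - (\<Sum>q'\<in>{q'\<in>path_tree_vertices S E v. path_tree_adj q q'}. matching_poly (S - set q') E)
        = (if q = [v] then matching_poly S E else 0)"
    if "q \<in> path_tree_vertices S E v" for q
    using assms(1) that by (rule path_tree_matching_poly_eq)
qed

lemma
  assumes "finite S" "v \<in> S"
  shows tendsto_matching_atom: "((\<lambda>x. (x - \<theta>) * poly (matching_poly (S - {v}) E) x / poly (matching_poly S E) x)
           \<longlongrightarrow> matching_atom S E v \<theta>) (at \<theta>)"
    and matching_atom_nonneg: "matching_atom S E v \<theta> \<ge> 0"
proof -
  interpret polynomial_resolvent "path_tree_vertices S E v" path_tree_adj "[v]"
      "\<lambda>q. matching_poly (S - set q) E" "matching_poly S E" \<theta>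
    using assms by (rule matching_poly_resolvent)
  have "matching_atom S E v \<theta> = residue [v]"
  proof (rule matching_atom_eqI[OF assms])
    show "residue xs = 0" if "xs \<notin> path_tree_vertices S E v" for xs
      using that by (rule residue_outside)
    show "path_tree_op S E v residue xs = \<theta> * residue xs" if "xs \<in> path_tree_vertices S E v" for xs
      using residue_eigen that by (simp add: path_tree_op_eq_adj_op)
    show "(\<Sum>xs\<in>path_tree_vertices S E v. residue xs * k xs) = k [v]"
      if "k \<in> eigenspace_pt S E v \<theta>" for k
      using residue_inner[of k] that
      by (simp add: eigenspace_pt_def path_tree_op_eq_adj_op)
  qed
  then show "((\<lambda>x. (x - \<theta>) * poly (matching_poly (S - {v}) E) x / poly (matching_poly S E) x)
           \<longlongrightarrow> matching_atom S E v \<theta>) (at \<theta>)"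
    and "matching_atom S E v \<theta> \<ge> 0"
    using tendsto_residue[OF root_in_P] residue_root_nonneg by simp_all
qed

lemma sum_matching_atom:
  assumes S: "finite S"
  shows "(\<Sum>v\<in>S. matching_atom S E v \<theta>) = order \<theta> (matching_poly S E)"
proof -
  have "((\<lambda>x. \<Sum>v\<in>S. (x - \<theta>) * poly (matching_poly (S - {v}) E) x / poly (matching_poly S E) x)
          \<longlongrightarrow> (\<Sum>v\<in>S. matching_atom S E v \<theta>)) (at \<theta>)"
    using S by (intro tendsto_sum tendsto_matching_atom)
  moreover have "(\<lambda>x. \<Sum>v\<in>S. (x - \<theta>) * poly (matching_poly (S - {v}) E) x / poly (matching_poly S E) x)
      = (\<lambda>x. (x - \<theta>) * poly (pderiv (matching_poly S E)) x / poly (matching_poly S E) x)"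
    by (simp add: pderiv_matching_poly[OF S] poly_sum sum_divide_distrib sum_distrib_left)
  ultimately have "((\<lambda>x. (x - \<theta>) * poly (pderiv (matching_poly S E)) x / poly (matching_poly S E) x)
      \<longlongrightarrow> (\<Sum>v\<in>S. matching_atom S E v \<theta>)) (at \<theta>)"
    by simp
  from LIM_unique[OF this tendsto_log_derivative_order[OF matching_poly_nonzero[OF S]]]
  show ?thesis by simp
qed

lemma matching_atom_order_drop:
  assumes "finite V" "u \<in> V"
  shows "order \<theta> (matching_poly V E) \<le> Suc (order \<theta> (matching_poly (V - {u}) E))"
    and "matching_atom V E u \<theta> \<noteq> 0
           \<longleftrightarrow> order \<theta> (matching_poly V E) = Suc (order \<theta> (matching_poly (V - {u}) E))"
proof -
  have nonzero: "matching_poly (V - {u}) E \<noteq> 0" "matching_poly V E \<noteq> 0"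
    using assms(1) by (simp_all add: matching_poly_nonzero)
  have lim: "((\<lambda>x. poly ([:-\<theta>, 1:] * matching_poly (V - {u}) E) x / poly (matching_poly V E) x)
          \<longlongrightarrow> matching_atom V E u \<theta>) (at \<theta>)"
    unfolding poly_linear_factor_mult using assms by (rule tendsto_matching_atom)
  have "[:-\<theta>, 1:] * matching_poly (V - {u}) E \<noteq> 0"
    using nonzero(1) by (intro no_zero_divisors) simp_all
  note orders = poly_quotient_tendsto_imp_order[OF this nonzero(2) lim,
      unfolded order_linear_factor_mult[OF nonzero(1)]]
  show "order \<theta> (matching_poly V E) \<le> Suc (order \<theta> (matching_poly (V - {u}) E))"
    using orders(1) .
  show "matching_atom V E u \<theta> \<noteq> 0
           \<longleftrightarrow> order \<theta> (matching_poly V E) = Suc (order \<theta> (matching_poly (V - {u}) E))"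
    using orders(2) by arith
qed

lemma tendsto_nbr_atom_sum:
  assumes V: "finite V" and u: "u \<in> V"
  shows "((\<lambda>x. poly ([:-\<theta>, 1:] * matching_poly V E) x / poly (matching_poly (V - {u}) E) x)
           \<longlongrightarrow> - nbr_atom_sum V E \<theta> u) (at \<theta>)"
proof -
  define N where "N = {w \<in> V - {u}. E u w}"
  define \<mu>' where "\<mu>' = matching_poly (V - {u}) E"
  have \<mu>'_nonzero: "\<mu>' \<noteq> 0" using V by (simp add: \<mu>'_def matching_poly_nonzero)
  have "{w\<in>V. E u w} = N" using irrefl unfolding N_def by auto
  then have nbr: "nbr_atom_sum V E \<theta> u = (\<Sum>w\<in>N. matching_atom (V - {u}) E w \<theta>)"
    by (simp add: nbr_atom_sum_def)
  have "((\<lambda>x. (x - \<theta>) * x - (\<Sum>w\<in>N. (x - \<theta>) * poly (matching_poly (V - {u} - {w}) E) x / poly \<mu>' x))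
          \<longlongrightarrow> (\<theta> - \<theta>) * \<theta> - nbr_atom_sum V E \<theta> u) (at \<theta>)"
    unfolding nbr \<mu>'_def using V by (intro tendsto_intros tendsto_matching_atom) (auto simp: N_def)
  moreover have "eventually (\<lambda>x. (x - \<theta>) * x - (\<Sum>w\<in>N. (x - \<theta>) * poly (matching_poly (V - {u} - {w}) E) x / poly \<mu>' x)
      = poly ([:-\<theta>, 1:] * matching_poly V E) x / poly \<mu>' x) (at \<theta>)"
    using eventually_poly_nonzero_at[OF \<mu>'_nonzero]
  proof eventually_elim
    case (elim x)
    define T where "T = (\<Sum>w\<in>N. poly (matching_poly (V - {u} - {w}) E) x)"
    have rec: "poly (matching_poly V E) x = x * poly \<mu>' x - T"
      unfolding matching_poly_rec[OF V u] \<mu>'_def N_def T_def by (simp add: poly_sum)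
    have sum: "(\<Sum>w\<in>N. (x - \<theta>) * poly (matching_poly (V - {u} - {w}) E) x / poly \<mu>' x)
        = (x - \<theta>) * T / poly \<mu>' x"
      by (simp add: T_def sum_distrib_left sum_divide_distrib)
    show ?case using elim unfolding sum poly_linear_factor_mult rec by (simp add: field_simps)
  qed
  ultimately show ?thesis unfolding \<mu>'_def by (auto intro: Lim_transform_eventually)
qed

lemma nbr_atom_sum_order_rise:
  assumes "finite V" "u \<in> V"
  shows "order \<theta> (matching_poly (V - {u}) E) \<le> Suc (order \<theta> (matching_poly V E))"
    and "nbr_atom_sum V E \<theta> u \<noteq> 0
           \<longleftrightarrow> order \<theta> (matching_poly (V - {u}) E) = Suc (order \<theta> (matching_poly V E))"
proof -
  have nonzero: "matching_poly (V - {u}) E \<noteq> 0" "matching_poly V E \<noteq> 0"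
    using assms(1) by (simp_all add: matching_poly_nonzero)
  have "[:-\<theta>, 1:] * matching_poly V E \<noteq> 0"
    using nonzero(2) by (intro no_zero_divisors) simp_all
  note orders = poly_quotient_tendsto_imp_order[OF this nonzero(1) tendsto_nbr_atom_sum[OF assms],
      unfolded order_linear_factor_mult[OF nonzero(2)]]
  show "order \<theta> (matching_poly (V - {u}) E) \<le> Suc (order \<theta> (matching_poly V E))"
    using orders(1) .
  show "nbr_atom_sum V E \<theta> u \<noteq> 0
           \<longleftrightarrow> order \<theta> (matching_poly (V - {u}) E) = Suc (order \<theta> (matching_poly V E))"
    using orders(2) by arith
qed

lemma sum_matching_atom_delete:
  assumes "finite V" "u \<in> V"
  shows "(\<Sum>v\<in>V - {u}. matching_atom (V - {u}) E v \<theta> - matching_atom V E v \<theta>)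
    = real (order \<theta> (matching_poly (V - {u}) E)) - real (order \<theta> (matching_poly V E))
      + matching_atom V E u \<theta>"
  using assms sum_matching_atom[of V] sum_matching_atom[of "V - {u}"]
    sum.remove[OF assms, of "\<lambda>v. matching_atom V E v \<theta>"]
  by (simp add: sum_subtractf)

end

theorem lemma3p16:
  fixes V :: "'a set" and E :: "'a \<Rightarrow> 'a \<Rightarrow> bool" and u :: 'a
    and \<theta> :: real and D :: nat
  assumes finV: "finite V"
    and edges: "\<And>x y. E x y \<Longrightarrow> x \<in> V \<and> y \<in> V"
    and sym: "\<And>x y. E x y \<Longrightarrow> E y x"
    and irrefl: "\<And>x. \<not> E x x"
    and deg: "\<And>x. x \<in> V \<Longrightarrow> card {y\<in>V. E x y} \<le> D"
    and uV: "u \<in> V"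
  shows "(positive_vtx V E \<theta> u \<longrightarrow>
            (\<Sum>v\<in>V - {u}. matching_atom (V - {u}) E v \<theta> - matching_atom V E v \<theta>) = 1)
       \<and> (neutral_vtx V E \<theta> u \<longrightarrow>
            (\<Sum>v\<in>V - {u}. matching_atom (V - {u}) E v \<theta> - matching_atom V E v \<theta>) = 0)
       \<and> (essential V E \<theta> u \<longrightarrow>
            (\<Sum>v\<in>V. (if v = u then 0 else matching_atom (V - {u}) E v \<theta>)
                       - matching_atom V E v \<theta>) = -1)"
proof -
  interpret simple_graph E using sym irrefl by unfold_locales
  define Z Z' where "Z = order \<theta> (matching_poly V E)" and "Z' = order \<theta> (matching_poly (V - {u}) E)"
  note drop = matching_atom_order_drop[OF finV uV, of \<theta>, folded Z_def Z'_def]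
  note rise = nbr_atom_sum_order_rise[OF finV uV, of \<theta>, folded Z_def Z'_def]
  note delete = sum_matching_atom_delete[OF finV uV, of \<theta>, folded Z_def Z'_def]
  have "(\<Sum>v\<in>V. (if v = u then 0 else matching_atom (V - {u}) E v \<theta>) - matching_atom V E v \<theta>)
      = real Z' - real Z"
    using delete sum.remove[OF finV uV, of "\<lambda>v. (if v = u then 0 else matching_atom (V - {u}) E v \<theta>)
                                              - matching_atom V E v \<theta>"] by simp
  moreover have "matching_atom V E u \<theta> \<ge> 0" using finV uV by (rule matching_atom_nonneg)
  ultimately show ?thesis
    using drop rise unfolding delete positive_vtx_def neutral_vtx_def essential_def by auto
qed

end
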